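(* Let $\mathbf Q$ be a stabilizer group on $n$ qubits with independent generating set $\mathrm{gen}(\mathbf Q)$ of Hermitian Pauli operators, $H_{\mathbf Q}=-\sum_{g\in\mathrm{gen}(\mathbf Q)}g$, and $\Delta_{\mathrm{gap}}:=2$ (twice the minimal coefficient of $H_{\mathbf Q}$). Let $V=-\sum_{P\in\mathbf P(V)}w_P P$ with $\mathbf P(V)$ a set of Hermitian Pauli operators and $w_P>0$, and $H=H_{\mathbf Q}+V$. Let $V_\perp=-\sum_{P\in\mathbf P(V)\setminus C(\mathbf Q)}w_P P$ and assume $V_\perp\neq0$. Assume: (i) there is a state $|\psi'_{\mathbf Q}\rangle\in V_{\mathbf Q}$ with $\langle\psi'_{\mathbf Q}|V_\perp^2|\psi'_{\mathbf Q}\rangle\neq0$; (ii) $\sum_{P\in\mathbf P(V)\setminus\mathbf Q}w_P<\Delta_{\mathrm{gap}}-2\sum_{P\in\mathbf P(V)\cap\mathbf Q}w_P$. For $\lambda\ge0$ let $|\psi'_{\mathbf Q}(\lambda)\rangle=\big(|\psi'_{\mathbf Q}\rangle-\lambda V_\perp|\psi'_{\mathbf Q}\rangle\big)/\big\||\psi'_{\mathbf Q}\rangle-\lambda V_\perp|\psi'_{\mathbf Q}\rangle\big\|$ and $\Delta E(\lambda)=\langle\psi'_{\mathbf Q}|H|\psi'_{\mathbf Q}\rangle-\langle\psi'_{\mathbf Q}(\lambda)|H|\psi'_{\mathbf Q}(\lambda)\rangle$. Then there exists $\lambda_{\max}>0$ such that $\Delta E(\lambda)$ is strictly positive and monotonically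 increasing for all $0<\lambda<\lambda_{\max}$.
   Context: A stabilizer group is an abelian subgroup of the $n$-qubit Pauli group $\{\pm1,\pm i\}\cdot\{\mathbb 1,X,Y,Z\}^{\otimes n}$ not containing $-\mathbb 1$; its code space is $V_{\mathbf Q}=\{|\psi\rangle: q|\psi\rangle=|\psi\rangle\ \forall q\in\mathbf Q\}$. $C(\mathbf Q)$ denotes the set of Pauli operators commuting with every element of $\mathbf Q$ (the Pauli centralizer). *)

theory Defs
  imports "Jordan_Normal_Form.Matrix"
begin

definition kron :: "complex mat \<Rightarrow> complex mat \<Rightarrow> complex mat" where
  "kron A B = mat (dim_row A * dim_row B) (dim_col A * dim_col B)
     (\<lambda>(i, j). A $$ (i div dim_row B, j div dim_col B) * B $$ (i mod dim_row B, j mod dim_col B))"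

definition pauli_I :: "complex mat" where "pauli_I = mat_of_rows_list 2 [[1, 0], [0, 1]]"
definition pauli_X :: "complex mat" where "pauli_X = mat_of_rows_list 2 [[0, 1], [1, 0]]"
definition pauli_Y :: "complex mat" where "pauli_Y = mat_of_rows_list 2 [[0, - \<i>], [\<i>, 0]]"
definition pauli_Z :: "complex mat" where "pauli_Z = mat_of_rows_list 2 [[1, 0], [0, -1]]"

text \<open>Tensor product of a list of single-qubit operators (qubit 1 first).\<close>
definition tensor_list :: "complex mat list \<Rightarrow> complex mat" where
  "tensor_list ps = foldr kron ps (1\<^sub>m 1)"

definition pauli_group :: "nat \<Rightarrow> complex mat set" where
  "pauli_group n = {c \<cdot>\<^sub>m tensor_list ps | c ps. c \<in> {1, -1, \<i>, -\<i>} \<and> length ps = n \<and>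
       set ps \<subseteq> {pauli_I, pauli_X, pauli_Y, pauli_Z}}"

definition hermitian_mat :: "complex mat \<Rightarrow> bool" where
  "hermitian_mat A \<longleftrightarrow> dim_row A = dim_col A \<and>
     (\<forall>i < dim_row A. \<forall>j < dim_col A. A $$ (i, j) = cnj (A $$ (j, i)))"

definition stabilizer_group :: "nat \<Rightarrow> complex mat set \<Rightarrow> bool" where
  "stabilizer_group n Q \<longleftrightarrow> Q \<subseteq> pauli_group n \<and> 1\<^sub>m (2^n) \<in> Q \<and>
     (\<forall>a\<in>Q. \<forall>b\<in>Q. a * b \<in> Q) \<and>
     (\<forall>a\<in>Q. \<exists>b\<in>Q. a * b = 1\<^sub>m (2^n)) \<and>
     (\<forall>a\<in>Q. \<forall>b\<in>Q. a * b = b * a) \<and>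
     - 1\<^sub>m (2^n) \<notin> Q"

text \<open>Subgroup of the n-qubit Pauli group generated by a set of Pauli operators
  (monoid closure; equals the group closure since Paulis have finite order).\<close>
inductive_set generated :: "nat \<Rightarrow> complex mat set \<Rightarrow> complex mat set" for n G where
  gen_one: "1\<^sub>m (2^n) \<in> generated n G"
| gen_base: "g \<in> G \<Longrightarrow> g \<in> generated n G"
| gen_mult: "a \<in> generated n G \<Longrightarrow> b \<in> generated n G \<Longrightarrow> a * b \<in> generated n G"

definition independent_gens :: "nat \<Rightarrow> complex mat set \<Rightarrow> bool" where
  "independent_gens n G \<longleftrightarrow> (\<forall>g\<in>G. g \<notin> generated n (G - {g}))"

definition code_space :: "nat \<Rightarrow> complex mat set \<Rightarrow> complex vec set" where
  "code_space n Q = {\<psi>. \<psi> \<in> carrier_vec (2^n) \<and> (\<forall>q\<in>Q. q *\<^sub>v \<psi> = \<psi>)}"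

definition pauli_centralizer :: "nat \<Rightarrow> complex mat set \<Rightarrow> complex mat set" where
  "pauli_centralizer n Q = {P \<in> pauli_group n. \<forall>q\<in>Q. P * q = q * P}"

definition lin_comb :: "nat \<Rightarrow> (complex mat \<Rightarrow> complex) \<Rightarrow> complex mat set \<Rightarrow> complex mat" where
  "lin_comb n c S = mat (2^n) (2^n) (\<lambda>(i, j). \<Sum>P\<in>S. c P * P $$ (i, j))"

definition expect :: "complex mat \<Rightarrow> complex vec \<Rightarrow> complex" where
  "expect A \<phi> = (A *\<^sub>v \<phi>) \<bullet>c \<phi>"

definition vnorm :: "complex vec \<Rightarrow> real" where
  "vnorm \<phi> = sqrt (Re (\<phi> \<bullet>c \<phi>))"

end

theory Submission
  imports Defs
begin

text \<open>
  Put \<open>v = V\<^sub>\<perp> \<psi>\<close>. Every Pauli term of \<open>V\<^sub>\<perp>\<close> anticommutes with some stabilizer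
  \<open>q\<close>, and \<open>q\<close> is unitary and fixes \<open>\<psi>\<close>; hence \<open>v \<perp> \<psi>\<close>, and likewise \<open>v \<perp> P \<psi>\<close> for
  every Hermitian \<open>P\<close> commuting with \<open>Q\<close>. As \<open>H\<^sub>Q\<close> acts on \<open>\<psi>\<close> as a scalar and the terms
  of \<open>V\<close> inside \<open>C(Q)\<close> commute with \<open>Q\<close>, this gives \<open>\<langle>v, H \<psi>\<rangle> = \<parallel>v\<parallel>\<^sup>2\<close>. Expanding the
  energy of the normalised state \<open>\<psi> - \<lambda> v\<close> then yields
  \<open>\<Delta>E(\<lambda>) = \<lambda> (2a + k\<lambda>) / (1 + a\<lambda>\<^sup>2)\<close> with \<open>a = \<parallel>v\<parallel>\<^sup>2 = \<langle>\<psi>|V\<^sub>\<perp>\<^sup>2|\<psi>\<rangle> > 0\<close> by (i) and some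
  real \<open>k\<close>, which is positive and increasing for small \<open>\<lambda> > 0\<close>.
\<close>

lemma sum_lessThan_mult_split:
  fixes g :: "nat \<Rightarrow> 'a::comm_monoid_add"
  shows "(\<Sum>k<b * d. g k) = (\<Sum>i<b. \<Sum>j<d. g (i * d + j))"
proof -
  have "(\<Sum>k<b * d. g k) = (\<Sum>i<b. sum g {i * d..<i * d + d})"
    by (rule sum.nat_group[symmetric])
  also have "\<dots> = (\<Sum>i<b. \<Sum>j<d. g (i * d + j))"
    by (rule sum.cong[OF refl]) (simp add: sum.atLeastLessThan_shift_bounds[of _ 0 _ d, simplified] lessThan_atLeast0 add.commute)
  finally show ?thesis .
qed

lemma div_mod_less_mult: "i < a * (b::nat) \<Longrightarrow> i div b < a \<and> i mod b < b"
  by (metis less_mult_imp_div_less mod_less_divisor mult_zero_right not_less_zero gr0I)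

lemma mult_add_less_mult_nat: "k1 < (b::nat) \<Longrightarrow> k2 < d \<Longrightarrow> k1 * d + k2 < b * d"
proof -
  assume "k1 < b" "k2 < d"
  then have "k1 * d + k2 < Suc k1 * d" by simp
  also have "\<dots> \<le> b * d" using \<open>k1 < b\<close> by (intro mult_le_mono1) simp
  finally show ?thesis .
qed

lemma smult_smult_mat: "a \<cdot>\<^sub>m (b \<cdot>\<^sub>m A) = (a * b :: 'a::comm_semiring_0) \<cdot>\<^sub>m A"
  by (rule eq_matI) (auto simp: ac_simps)

lemma one_smult_mat: "(1 :: 'a::semiring_1) \<cdot>\<^sub>m A = A"
  by (rule eq_matI) auto

lemma smult_mat_mult_vec: "dim_vec x = dim_col A \<Longrightarrow> (c \<cdot>\<^sub>m A) *\<^sub>v x = c \<cdot>\<^sub>v (A *\<^sub>v x)"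
  by (rule eq_vecI) (auto simp: scalar_prod_def sum_distrib_left mult.assoc intro!: sum.cong)

lemma anticommute_mult_left_commuting:
  fixes B P q :: "'a::ring mat"
  assumes B: "B \<in> carrier_mat N N" and P: "P \<in> carrier_mat N N" and q: "q \<in> carrier_mat N N"
    and "B * q = q * B" "P * q = - (q * P)"
  shows "(B * P) * q = - (q * (B * P))"
proof -
  have "(B * P) * q = B * (P * q)" using B P q by simp
  also have "\<dots> = B * - (q * P)" using \<open>P * q = - (q * P)\<close> by simp
  also have "\<dots> = - (B * (q * P))" using B P q by (intro uminus_mult_right_mat) simp
  also have "\<dots> = - ((B * q) * P)" using B P q by simp
  also have "\<dots> = - (q * (B * P))" using B P q \<open>B * q = q * B\<close> by simp
  finally show ?thesis .
qed

section \<open>Kronecker products\<close>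

lemma kron_dims [simp]:
  "dim_row (kron A B) = dim_row A * dim_row B"
  "dim_col (kron A B) = dim_col A * dim_col B"
  by (simp_all add: kron_def)

lemma index_kron [simp]:
  "i < dim_row A * dim_row B \<Longrightarrow> j < dim_col A * dim_col B \<Longrightarrow>
   kron A B $$ (i, j) = A $$ (i div dim_row B, j div dim_col B) * B $$ (i mod dim_row B, j mod dim_col B)"
  by (simp add: kron_def)

lemma kron_mult:
  assumes A: "A \<in> carrier_mat a b" and B: "B \<in> carrier_mat c d"
    and C: "C \<in> carrier_mat b e" and D: "D \<in> carrier_mat d f" and "d > 0"
  shows "kron A B * kron C D = kron (A * C) (B * D)"
proof (rule eq_matI)
  fix i j assume "i < dim_row (kron (A * C) (B * D))" "j < dim_col (kron (A * C) (B * D))"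
  then have i: "i < a * c" and j: "j < e * f" using A B C D by auto
  have split: "k1 * d + k2 < b * d \<and> (k1 * d + k2) div d = k1 \<and> (k1 * d + k2) mod d = k2"
    if "k1 < b" "k2 < d" for k1 k2
    using that by (simp add: mult_add_less_mult_nat)
  have "(kron A B * kron C D) $$ (i, j) = (\<Sum>k<b * d. kron A B $$ (i, k) * kron C D $$ (k, j))"
    using i j A B C D by (simp add: times_mat_def scalar_prod_def lessThan_atLeast0)
  also have "\<dots> = (\<Sum>k1<b. \<Sum>k2<d. kron A B $$ (i, k1 * d + k2) * kron C D $$ (k1 * d + k2, j))"
    by (rule sum_lessThan_mult_split)
  also have "\<dots> = (\<Sum>k1<b. \<Sum>k2<d. (A $$ (i div c, k1) * C $$ (k1, j div f)) *
                                     (B $$ (i mod c, k2) * D $$ (k2, j mod f)))"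
    using A B C D i j split by (intro sum.cong refl) simp
  also have "\<dots> = (\<Sum>k1<b. A $$ (i div c, k1) * C $$ (k1, j div f)) *
                  (\<Sum>k2<d. B $$ (i mod c, k2) * D $$ (k2, j mod f))"
    by (simp add: sum_product)
  also have "\<dots> = kron (A * C) (B * D) $$ (i, j)"
    using A B C D i j div_mod_less_mult[OF i] div_mod_less_mult[OF j]
    by (simp add: times_mat_def scalar_prod_def lessThan_atLeast0)
  finally show "(kron A B * kron C D) $$ (i, j) = kron (A * C) (B * D) $$ (i, j)" .
qed (use A B C D in auto)

lemma kron_smult_left: "kron (s \<cdot>\<^sub>m A) B = s \<cdot>\<^sub>m kron A B"
  by (rule eq_matI) (auto simp: kron_def dest!: div_mod_less_mult)

lemma kron_smult_right: "kron A (s \<cdot>\<^sub>m B) = s \<cdot>\<^sub>m kron A B"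
  by (rule eq_matI) (auto simp: kron_def dest!: div_mod_less_mult)

lemma kron_one:
  assumes "b > 0"
  shows "kron (1\<^sub>m a) (1\<^sub>m b) = 1\<^sub>m (a * b)"
proof (rule eq_matI)
  fix i j assume "i < dim_row (1\<^sub>m (a * b))" "j < dim_col (1\<^sub>m (a * b))"
  then have "i < a * b" "j < a * b" by auto
  moreover have "i div b = j div b \<and> i mod b = j mod b \<longleftrightarrow> i = j"
    by (metis div_mult_mod_eq)
  ultimately show "kron (1\<^sub>m a) (1\<^sub>m b) $$ (i, j) = 1\<^sub>m (a * b) $$ (i, j)"
    using assms by (auto dest!: div_mod_less_mult)
qed auto

lemma hermitian_mat_kron:
  assumes A: "hermitian_mat A" and B: "hermitian_mat B"
  shows "hermitian_mat (kron A B)"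
proof -
  define m where "m = dim_row B"
  have sq: "dim_col A = dim_row A" "dim_col B = m" using A B by (auto simp: hermitian_mat_def m_def)
  show ?thesis
    unfolding hermitian_mat_def
  proof (intro conjI allI impI)
    show "dim_row (kron A B) = dim_col (kron A B)" using sq by (simp add: m_def)
    fix i j assume "i < dim_row (kron A B)" "j < dim_col (kron A B)"
    then have i: "i < dim_row A * m" and j: "j < dim_row A * m" using sq by (auto simp: m_def)
    have A_ij: "A $$ (i div m, j div m) = cnj (A $$ (j div m, i div m))"
      using A div_mod_less_mult[OF i] div_mod_less_mult[OF j] sq unfolding hermitian_mat_def by metis
    have B_ij: "B $$ (i mod m, j mod m) = cnj (B $$ (j mod m, i mod m))"
      using B div_mod_less_mult[OF i] div_mod_less_mult[OF j] sq unfolding hermitian_mat_def m_def by metis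
    show "kron A B $$ (i, j) = cnj (kron A B $$ (j, i))"
      using i j sq by (simp add: m_def[symmetric] A_ij B_ij)
  qed
qed

section \<open>Pauli operators\<close>

definition pauli_basis :: "complex mat set" where
  "pauli_basis = {pauli_I, pauli_X, pauli_Y, pauli_Z}"

lemma pauli_carrier [simp]:
  "pauli_I \<in> carrier_mat 2 2" "pauli_X \<in> carrier_mat 2 2" "pauli_Y \<in> carrier_mat 2 2" "pauli_Z \<in> carrier_mat 2 2"
  by (auto simp: pauli_I_def pauli_X_def pauli_Y_def pauli_Z_def mat_of_rows_list_def)

lemma pauli_index [simp]:
  "pauli_I $$ (0, 0) = 1" "pauli_I $$ (0, Suc 0) = 0" "pauli_I $$ (Suc 0, 0) = 0" "pauli_I $$ (Suc 0, Suc 0) = 1"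
  "pauli_X $$ (0, 0) = 0" "pauli_X $$ (0, Suc 0) = 1" "pauli_X $$ (Suc 0, 0) = 1" "pauli_X $$ (Suc 0, Suc 0) = 0"
  "pauli_Y $$ (0, 0) = 0" "pauli_Y $$ (0, Suc 0) = -\<i>" "pauli_Y $$ (Suc 0, 0) = \<i>" "pauli_Y $$ (Suc 0, Suc 0) = 0"
  "pauli_Z $$ (0, 0) = 1" "pauli_Z $$ (0, Suc 0) = 0" "pauli_Z $$ (Suc 0, 0) = 0" "pauli_Z $$ (Suc 0, Suc 0) = -1"
  by (auto simp: pauli_I_def pauli_X_def pauli_Y_def pauli_Z_def mat_of_rows_list_def)

lemma pauli_dims [simp]:
  "dim_row pauli_I = 2" "dim_row pauli_X = 2" "dim_row pauli_Y = 2" "dim_row pauli_Z = 2"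
  "dim_col pauli_I = 2" "dim_col pauli_X = 2" "dim_col pauli_Y = 2" "dim_col pauli_Z = 2"
  by (simp_all add: pauli_I_def pauli_X_def pauli_Y_def pauli_Z_def mat_of_rows_list_def)

lemma mult_2x2_carrier [simp]: "A \<in> carrier_mat 2 2 \<Longrightarrow> B \<in> carrier_mat 2 2 \<Longrightarrow> A * B \<in> carrier_mat 2 2"
  by auto

lemma mat_2x2_eq_iff:
  "A \<in> carrier_mat 2 2 \<Longrightarrow> B \<in> carrier_mat 2 2 \<Longrightarrow> A = B \<longleftrightarrow>
   A $$ (0, 0) = B $$ (0, 0) \<and> A $$ (0, Suc 0) = B $$ (0, Suc 0) \<and>
   A $$ (Suc 0, 0) = B $$ (Suc 0, 0) \<and> A $$ (Suc 0, Suc 0) = B $$ (Suc 0, Suc 0)"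
  by (auto simp: mat_eq_iff less_2_cases_iff)

lemma row_col_2x2:
  "A \<in> carrier_mat 2 2 \<Longrightarrow> B \<in> carrier_mat 2 2 \<Longrightarrow> i < 2 \<Longrightarrow> j < 2 \<Longrightarrow>
   row A i \<bullet> col B j = A $$ (i, 0) * B $$ (0, j) + A $$ (i, Suc 0) * B $$ (Suc 0, j)"
  by (simp add: scalar_prod_def numeral_2_eq_2)

lemma pauli_basis_carrier: "a \<in> pauli_basis \<Longrightarrow> a \<in> carrier_mat 2 2"
  by (auto simp: pauli_basis_def)

lemma hermitian_pauli_basis: "a \<in> pauli_basis \<Longrightarrow> hermitian_mat a"
  by (auto simp: pauli_basis_def hermitian_mat_def less_2_cases_iff)

lemma pauli_basis_involution: "a \<in> pauli_basis \<Longrightarrow> a * a = 1\<^sub>m 2"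
  by (auto simp: pauli_basis_def mat_2x2_eq_iff row_col_2x2)

lemma pauli_basis_commute_or_anticommute:
  "a \<in> pauli_basis \<Longrightarrow> b \<in> pauli_basis \<Longrightarrow> a * b = b * a \<or> a * b = (-1) \<cdot>\<^sub>m (b * a)"
  by (auto simp: pauli_basis_def mat_2x2_eq_iff row_col_2x2)

lemma tensor_list_Nil [simp]: "tensor_list [] = 1\<^sub>m 1"
  and tensor_list_Cons [simp]: "tensor_list (a # ps) = kron a (tensor_list ps)"
  by (simp_all add: tensor_list_def)

lemma tensor_list_carrier:
  "set ps \<subseteq> pauli_basis \<Longrightarrow> tensor_list ps \<in> carrier_mat (2 ^ length ps) (2 ^ length ps)"
proof (induction ps)
  case (Cons a ps)
  then have "a \<in> carrier_mat 2 2" "tensor_list ps \<in> carrier_mat (2 ^ length ps) (2 ^ length ps)"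
    using pauli_basis_carrier by auto
  then show ?case by (intro carrier_matI) auto
qed simp

lemma hermitian_tensor_list: "set ps \<subseteq> pauli_basis \<Longrightarrow> hermitian_mat (tensor_list ps)"
proof (induction ps)
  case Nil
  show ?case by (simp add: hermitian_mat_def)
next
  case (Cons a ps)
  then show ?case by (simp add: hermitian_mat_kron hermitian_pauli_basis)
qed

lemma tensor_list_involution:
  "set ps \<subseteq> pauli_basis \<Longrightarrow> tensor_list ps * tensor_list ps = 1\<^sub>m (2 ^ length ps)"
proof (induction ps)
  case (Cons a ps)
  then have a: "a \<in> pauli_basis" and ps: "set ps \<subseteq> pauli_basis" by auto
  have "tensor_list (a # ps) * tensor_list (a # ps) = kron (a * a) (tensor_list ps * tensor_list ps)"
    using pauli_basis_carrier[OF a] tensor_list_carrier[OF ps] by (simp add: kron_mult)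
  also have "\<dots> = 1\<^sub>m (2 ^ length (a # ps))"
    using Cons.IH[OF ps] pauli_basis_involution[OF a] by (simp add: kron_one)
  finally show ?case .
qed simp

lemma tensor_list_commute_or_anticommute:
  assumes "set ps \<subseteq> pauli_basis" "set qs \<subseteq> pauli_basis" "length ps = length qs"
  shows "\<exists>s\<in>{1, -1}. tensor_list ps * tensor_list qs = s \<cdot>\<^sub>m (tensor_list qs * tensor_list ps)"
  using assms
proof (induction ps arbitrary: qs)
  case Nil
  then show ?case by auto
next
  case (Cons a ps)
  then obtain b qs' where qs: "qs = b # qs'" by (cases qs) auto
  have a: "a \<in> pauli_basis" and b: "b \<in> pauli_basis"
    and ps: "set ps \<subseteq> pauli_basis" and qs': "set qs' \<subseteq> pauli_basis" and len: "length ps = length qs'"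
    using Cons.prems qs by auto
  obtain s where s: "s \<in> {1, -1}"
    and st: "tensor_list ps * tensor_list qs' = s \<cdot>\<^sub>m (tensor_list qs' * tensor_list ps)"
    using Cons.IH[OF ps qs' len] by blast
  obtain r where r: "r \<in> {1, -1}" and rt: "a * b = r \<cdot>\<^sub>m (b * a)"
    using pauli_basis_commute_or_anticommute[OF a b] by (metis insertCI one_smult_mat)
  have carriers: "a \<in> carrier_mat 2 2" "b \<in> carrier_mat 2 2"
    "tensor_list ps \<in> carrier_mat (2 ^ length ps) (2 ^ length ps)"
    "tensor_list qs' \<in> carrier_mat (2 ^ length ps) (2 ^ length ps)"
    using a b pauli_basis_carrier tensor_list_carrier[OF ps] tensor_list_carrier[OF qs'] len by auto
  have "tensor_list (a # ps) * tensor_list qs = kron (a * b) (tensor_list ps * tensor_list qs')"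
    using qs carriers by (simp add: kron_mult)
  also have "\<dots> = (r * s) \<cdot>\<^sub>m kron (b * a) (tensor_list qs' * tensor_list ps)"
    by (simp add: rt st kron_smult_left kron_smult_right smult_smult_mat mult.commute)
  also have "kron (b * a) (tensor_list qs' * tensor_list ps) = tensor_list qs * tensor_list (a # ps)"
    using qs carriers by (simp add: kron_mult)
  finally show ?case using r s by (intro bexI[of _ "r * s"]) auto
qed

lemma pauli_group_elim:
  assumes "P \<in> pauli_group n"
  obtains c ps where "P = c \<cdot>\<^sub>m tensor_list ps" "c \<in> {1, -1, \<i>, -\<i>}"
    "length ps = n" "set ps \<subseteq> pauli_basis"
  using assms unfolding pauli_group_def pauli_basis_def by blast

lemma pauli_group_carrier: "P \<in> pauli_group n \<Longrightarrow> P \<in> carrier_mat (2 ^ n) (2 ^ n)"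
  by (elim pauli_group_elim) (use tensor_list_carrier in auto)

lemma pauli_group_commute_or_anticommute:
  assumes "P \<in> pauli_group n" "q \<in> pauli_group n"
  shows "P * q = q * P \<or> P * q = - (q * P)"
proof -
  obtain c ps where P: "P = c \<cdot>\<^sub>m tensor_list ps" and ps: "length ps = n" "set ps \<subseteq> pauli_basis"
    using assms(1) by (elim pauli_group_elim)
  obtain d qs where q: "q = d \<cdot>\<^sub>m tensor_list qs" and qs: "length qs = n" "set qs \<subseteq> pauli_basis"
    using assms(2) by (elim pauli_group_elim)
  have T: "tensor_list ps \<in> carrier_mat (2 ^ n) (2 ^ n)" "tensor_list qs \<in> carrier_mat (2 ^ n) (2 ^ n)"
    using tensor_list_carrier[OF ps(2)] tensor_list_carrier[OF qs(2)] ps qs by auto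
  obtain s where s: "s \<in> {1, -1}"
    and st: "tensor_list ps * tensor_list qs = s \<cdot>\<^sub>m (tensor_list qs * tensor_list ps)"
    using tensor_list_commute_or_anticommute[OF ps(2) qs(2)] ps qs by auto
  have "P * q = (c * d) \<cdot>\<^sub>m (tensor_list ps * tensor_list qs)"
    unfolding P q mult_smult_assoc_mat[OF T(1) smult_carrier_mat[OF T(2)]] mult_smult_distrib[OF T(1) T(2)]
    by (simp add: smult_smult_mat)
  also have "\<dots> = s \<cdot>\<^sub>m ((d * c) \<cdot>\<^sub>m (tensor_list qs * tensor_list ps))"
    by (simp add: st smult_smult_mat mult.commute mult.left_commute)
  also have "(d * c) \<cdot>\<^sub>m (tensor_list qs * tensor_list ps) = q * P"
    unfolding P q mult_smult_assoc_mat[OF T(2) smult_carrier_mat[OF T(1)]] mult_smult_distrib[OF T(2) T(1)]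
    by (simp add: smult_smult_mat)
  finally show ?thesis
    using s by (auto simp: one_smult_mat)
qed

section \<open>Inner products and Hermitian operators\<close>

lemma cscalar_prod_swap:
  fixes x y :: "complex vec"
  shows "x \<in> carrier_vec N \<Longrightarrow> y \<in> carrier_vec N \<Longrightarrow> y \<bullet>c x = cnj (x \<bullet>c y)"
  by (simp add: scalar_prod_def cnj_sum mult.commute)

lemma cscalar_prod_smult_right:
  fixes x y :: "complex vec"
  shows "dim_vec x = dim_vec y \<Longrightarrow> x \<bullet>c (b \<cdot>\<^sub>v y) = cnj b * (x \<bullet>c y)"
  by (simp add: conjugate_smult_vec)

lemma cscalar_prod_diff_smult:
  fixes x y z w :: "complex vec"
  assumes "x \<in> carrier_vec N" "y \<in> carrier_vec N" "z \<in> carrier_vec N" "w \<in> carrier_vec N"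
  shows "(x - t \<cdot>\<^sub>v y) \<bullet>c (z - t \<cdot>\<^sub>v w) =
         x \<bullet>c z - cnj t * (x \<bullet>c w) - t * (y \<bullet>c z) + t * cnj t * (y \<bullet>c w)"
  using assms
  by (simp add: scalar_prod_def sum_subtractf sum.distrib sum_distrib_left algebra_simps)

lemma cscalar_prod_self_real_nonneg:
  fixes x :: "complex vec"
  shows "x \<bullet>c x = complex_of_real (Re (x \<bullet>c x)) \<and> Re (x \<bullet>c x) \<ge> 0"
  using conjugate_square_ge_0_vec[of x] by (simp add: less_eq_complex_def complex_eq_iff)

lemma vnorm_eq_1_cscalar_prod:
  "vnorm \<psi> = 1 \<Longrightarrow> \<psi> \<bullet>c \<psi> = 1"
  using cscalar_prod_self_real_nonneg[of \<psi>] by (simp add: vnorm_def)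

lemma hermitian_mat_index:
  "hermitian_mat A \<Longrightarrow> A \<in> carrier_mat N N \<Longrightarrow> i < N \<Longrightarrow> j < N \<Longrightarrow> cnj (A $$ (j, i)) = A $$ (i, j)"
  unfolding hermitian_mat_def by (metis carrier_matD)

lemma hermitian_mat_add:
  assumes "hermitian_mat A" "hermitian_mat B" "A \<in> carrier_mat N N" "B \<in> carrier_mat N N"
  shows "hermitian_mat (A + B)"
  using assms hermitian_mat_index[OF assms(1,3)] hermitian_mat_index[OF assms(2,4)]
  unfolding hermitian_mat_def[of "A + B"] by auto

lemma cscalar_prod_mult_mat_vec_left:
  fixes A :: "complex mat"
  assumes "A \<in> carrier_mat N N" "x \<in> carrier_vec N" "y \<in> carrier_vec N"
  shows "(A *\<^sub>v x) \<bullet>c y = (\<Sum>i<N. \<Sum>j<N. A $$ (i, j) * x $ j * cnj (y $ i))"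
  using assms by (simp add: scalar_prod_def lessThan_atLeast0 sum_distrib_right)

lemma cscalar_prod_mult_mat_vec_right:
  fixes A :: "complex mat"
  assumes "A \<in> carrier_mat N N" "x \<in> carrier_vec N" "y \<in> carrier_vec N"
  shows "x \<bullet>c (A *\<^sub>v y) = (\<Sum>i<N. \<Sum>j<N. x $ i * cnj (A $$ (i, j)) * cnj (y $ j))"
  using assms by (simp add: scalar_prod_def lessThan_atLeast0 cnj_sum sum_distrib_left mult.assoc)

lemma hermitian_mat_cscalar_prod:
  assumes A: "A \<in> carrier_mat N N" and h: "hermitian_mat A"
    and x: "x \<in> carrier_vec N" and y: "y \<in> carrier_vec N"
  shows "(A *\<^sub>v x) \<bullet>c y = x \<bullet>c (A *\<^sub>v y)"
proof -
  have "(A *\<^sub>v x) \<bullet>c y = (\<Sum>j<N. \<Sum>i<N. A $$ (i, j) * x $ j * cnj (y $ i))"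
    unfolding cscalar_prod_mult_mat_vec_left[OF A x y] by (rule sum.swap)
  also have "\<dots> = (\<Sum>j<N. \<Sum>i<N. x $ j * cnj (A $$ (j, i)) * cnj (y $ i))"
    by (intro sum.cong refl) (simp add: hermitian_mat_index[OF h A])
  also have "\<dots> = x \<bullet>c (A *\<^sub>v y)"
    using A x y by (simp add: cscalar_prod_mult_mat_vec_right)
  finally show ?thesis .
qed

lemma pauli_group_cscalar_prod:
  assumes "q \<in> pauli_group n" "x \<in> carrier_vec (2 ^ n)" "y \<in> carrier_vec (2 ^ n)"
  shows "(q *\<^sub>v x) \<bullet>c (q *\<^sub>v y) = x \<bullet>c y"
proof -
  obtain c ps where q: "q = c \<cdot>\<^sub>m tensor_list ps" and c: "c \<in> {1, -1, \<i>, -\<i>}"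
    and ps: "length ps = n" "set ps \<subseteq> pauli_basis"
    using assms(1) by (elim pauli_group_elim)
  let ?T = "tensor_list ps"
  have T: "?T \<in> carrier_mat (2 ^ n) (2 ^ n)" "hermitian_mat ?T" "?T * ?T = 1\<^sub>m (2 ^ n)"
    using tensor_list_carrier[OF ps(2)] hermitian_tensor_list[OF ps(2)] tensor_list_involution[OF ps(2)] ps
    by auto
  have "(q *\<^sub>v x) \<bullet>c (q *\<^sub>v y) = c * cnj c * ((?T *\<^sub>v x) \<bullet>c (?T *\<^sub>v y))"
    using T assms(2,3) by (simp add: q smult_mat_mult_vec cscalar_prod_smult_right)
  also have "(?T *\<^sub>v x) \<bullet>c (?T *\<^sub>v y) = x \<bullet>c (?T *\<^sub>v (?T *\<^sub>v y))"
    using T assms(2,3) by (intro hermitian_mat_cscalar_prod) auto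
  also have "?T *\<^sub>v (?T *\<^sub>v y) = y"
    using T assms(3) by (simp flip: assoc_mult_mat_vec)
  finally show ?thesis using c by auto
qed

lemma lin_comb_carrier [simp]: "lin_comb n c S \<in> carrier_mat (2 ^ n) (2 ^ n)"
  by (simp add: lin_comb_def)

lemma lin_comb_cscalar_prod:
  assumes S: "\<forall>P\<in>S. P \<in> carrier_mat (2 ^ n) (2 ^ n)"
    and x: "x \<in> carrier_vec (2 ^ n)" and y: "y \<in> carrier_vec (2 ^ n)"
  shows "(lin_comb n c S *\<^sub>v x) \<bullet>c y = (\<Sum>P\<in>S. c P * ((P *\<^sub>v x) \<bullet>c y))"
proof -
  have "(lin_comb n c S *\<^sub>v x) \<bullet>c y =
        (\<Sum>i<2 ^ n. \<Sum>j<2 ^ n. \<Sum>P\<in>S. c P * (P $$ (i, j) * x $ j * cnj (y $ i)))"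
    using x y by (simp add: cscalar_prod_mult_mat_vec_left[of _ "2 ^ n"] lin_comb_def sum_distrib_right mult.assoc)
  also have "\<dots> = (\<Sum>P\<in>S. \<Sum>i<2 ^ n. \<Sum>j<2 ^ n. c P * (P $$ (i, j) * x $ j * cnj (y $ i)))"
    by (simp only: sum.swap[of _ S])
  also have "\<dots> = (\<Sum>P\<in>S. c P * ((P *\<^sub>v x) \<bullet>c y))"
  proof (rule sum.cong[OF refl])
    fix P assume "P \<in> S"
    then show "(\<Sum>i<2 ^ n. \<Sum>j<2 ^ n. c P * (P $$ (i, j) * x $ j * cnj (y $ i))) = c P * ((P *\<^sub>v x) \<bullet>c y)"
      using S x y by (simp add: cscalar_prod_mult_mat_vec_left[of P "2 ^ n"] sum_distrib_left mult.assoc)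
  qed
  finally show ?thesis .
qed

lemma hermitian_lin_comb:
  assumes "\<forall>P\<in>S. hermitian_mat P \<and> P \<in> carrier_mat (2 ^ n) (2 ^ n)" "\<forall>P\<in>S. c P \<in> \<real>"
  shows "hermitian_mat (lin_comb n c S)"
  unfolding hermitian_mat_def[of "lin_comb n c S"]
proof (intro conjI allI impI)
  fix i j assume "i < dim_row (lin_comb n c S)" "j < dim_col (lin_comb n c S)"
  then have ij: "i < 2 ^ n" "j < 2 ^ n" by (auto simp: lin_comb_def)
  have "c P * P $$ (i, j) = cnj (c P * P $$ (j, i))" if "P \<in> S" for P
    using assms that ij hermitian_mat_index[of P "2 ^ n" i j] by (simp add: Reals_cnj_iff)
  then show "lin_comb n c S $$ (i, j) = cnj (lin_comb n c S $$ (j, i))"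
    using ij by (simp add: lin_comb_def cnj_sum)
qed (simp add: lin_comb_def)

section \<open>Stabilizer codes\<close>

lemma code_space_anticommuting_cscalar_prod:
  assumes Q: "Q \<subseteq> pauli_group n" and q: "q \<in> Q" and \<psi>: "\<psi> \<in> code_space n Q"
    and A: "A \<in> carrier_mat (2 ^ n) (2 ^ n)" and anti: "A * q = - (q * A)"
  shows "(A *\<^sub>v \<psi>) \<bullet>c \<psi> = 0"
proof -
  have \<psi>c: "\<psi> \<in> carrier_vec (2 ^ n)" and q\<psi>: "q *\<^sub>v \<psi> = \<psi>"
    using \<psi> q by (auto simp: code_space_def)
  have qp: "q \<in> pauli_group n" using q Q by auto
  have qc: "q \<in> carrier_mat (2 ^ n) (2 ^ n)" using pauli_group_carrier[OF qp] .
  have "q *\<^sub>v (A *\<^sub>v \<psi>) = (q * A) *\<^sub>v \<psi>" using qc A \<psi>c by simp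
  also have "q * A = - (A * q)" using anti by simp
  also have "- (A * q) *\<^sub>v \<psi> = - (A *\<^sub>v \<psi>)" using qc A \<psi>c q\<psi> by simp
  finally have flip: "q *\<^sub>v (A *\<^sub>v \<psi>) = - (A *\<^sub>v \<psi>)" .
  have "(A *\<^sub>v \<psi>) \<bullet>c \<psi> = (q *\<^sub>v (A *\<^sub>v \<psi>)) \<bullet>c (q *\<^sub>v \<psi>)"
    using pauli_group_cscalar_prod[OF qp, of "A *\<^sub>v \<psi>" \<psi>] A \<psi>c by simp
  also have "\<dots> = - ((A *\<^sub>v \<psi>) \<bullet>c \<psi>)"
    unfolding flip q\<psi> using A \<psi>c by simp
  finally show ?thesis by simp
qed

lemma not_in_pauli_centralizer_anticommutes:
  assumes "P \<in> pauli_group n" "Q \<subseteq> pauli_group n" "P \<notin> pauli_centralizer n Q"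
  shows "\<exists>q\<in>Q. P * q = - (q * P)"
  using assms pauli_group_commute_or_anticommute unfolding pauli_centralizer_def by blast

lemma lin_comb_off_centralizer_orthogonal:
  assumes Q: "Q \<subseteq> pauli_group n" and S: "S \<subseteq> pauli_group n - pauli_centralizer n Q"
    and \<psi>: "\<psi> \<in> code_space n Q"
    and B: "B \<in> carrier_mat (2 ^ n) (2 ^ n)" "hermitian_mat B" and comm: "\<forall>q\<in>Q. B * q = q * B"
  shows "(lin_comb n c S *\<^sub>v \<psi>) \<bullet>c (B *\<^sub>v \<psi>) = 0"
proof -
  have \<psi>c: "\<psi> \<in> carrier_vec (2 ^ n)" using \<psi> by (simp add: code_space_def)
  have Sc: "\<forall>P\<in>S. P \<in> carrier_mat (2 ^ n) (2 ^ n)" using S pauli_group_carrier by blast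
  have "(P *\<^sub>v \<psi>) \<bullet>c (B *\<^sub>v \<psi>) = 0" if P: "P \<in> S" for P
  proof -
    obtain q where q: "q \<in> Q" and anti: "P * q = - (q * P)"
      using not_in_pauli_centralizer_anticommutes P S Q by blast
    have Pc: "P \<in> carrier_mat (2 ^ n) (2 ^ n)" using Sc P by blast
    have qc: "q \<in> carrier_mat (2 ^ n) (2 ^ n)" using q Q pauli_group_carrier by blast
    have "(P *\<^sub>v \<psi>) \<bullet>c (B *\<^sub>v \<psi>) = ((B * P) *\<^sub>v \<psi>) \<bullet>c \<psi>"
      using hermitian_mat_cscalar_prod[OF B, of "P *\<^sub>v \<psi>" \<psi>] Pc B \<psi>c by simp
    also have "\<dots> = 0"
      using code_space_anticommuting_cscalar_prod[OF Q q \<psi>] anticommute_mult_left_commuting[OF B(1) Pc qc]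
        comm q anti B Pc by simp
    finally show ?thesis .
  qed
  then show ?thesis
    using lin_comb_cscalar_prod[OF Sc \<psi>c] B \<psi>c by simp
qed

lemma lin_comb_off_centralizer_orthogonal_code_state:
  assumes Q: "Q \<subseteq> pauli_group n" and S: "S \<subseteq> pauli_group n - pauli_centralizer n Q"
    and \<psi>: "\<psi> \<in> code_space n Q"
  shows "(lin_comb n c S *\<^sub>v \<psi>) \<bullet>c \<psi> = 0"
proof -
  have "hermitian_mat (1\<^sub>m (2 ^ n))" by (simp add: hermitian_mat_def)
  moreover have "\<forall>q\<in>Q. 1\<^sub>m (2 ^ n) * q = q * 1\<^sub>m (2 ^ n)"
    using Q pauli_group_carrier by fastforce
  ultimately show ?thesis
    using lin_comb_off_centralizer_orthogonal[OF Q S \<psi> one_carrier_mat] \<psi> by (simp add: code_space_def)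
qed

lemma lin_comb_stabilizers_cscalar_prod:
  assumes Q: "Q \<subseteq> pauli_group n" and S: "S \<subseteq> Q" and \<psi>: "\<psi> \<in> code_space n Q"
    and y: "y \<in> carrier_vec (2 ^ n)"
  shows "(lin_comb n c S *\<^sub>v \<psi>) \<bullet>c y = sum c S * (\<psi> \<bullet>c y)"
proof -
  have "\<forall>P\<in>S. P \<in> carrier_mat (2 ^ n) (2 ^ n)" "\<forall>P\<in>S. P *\<^sub>v \<psi> = \<psi>"
    using S Q pauli_group_carrier \<psi> by (auto simp: code_space_def)
  then show ?thesis
    using lin_comb_cscalar_prod \<psi> y by (simp add: code_space_def sum_distrib_right)
qed

lemma lin_comb_overlap_off_centralizer:
  fixes c :: "complex mat \<Rightarrow> complex"
  assumes Q: "Q \<subseteq> pauli_group n" and \<psi>: "\<psi> \<in> code_space n Q"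
    and PV: "finite PV" "PV \<subseteq> pauli_group n" "\<forall>P\<in>PV. hermitian_mat P"
  defines "W \<equiv> lin_comb n c (PV - pauli_centralizer n Q)"
  shows "(lin_comb n c PV *\<^sub>v \<psi>) \<bullet>c (W *\<^sub>v \<psi>) = (W *\<^sub>v \<psi>) \<bullet>c (W *\<^sub>v \<psi>)"
proof -
  let ?C = "pauli_centralizer n Q" and ?v = "W *\<^sub>v \<psi>"
  have \<psi>c: "\<psi> \<in> carrier_vec (2 ^ n)" using \<psi> by (simp add: code_space_def)
  have PVc: "\<forall>P\<in>PV. P \<in> carrier_mat (2 ^ n) (2 ^ n)" using PV pauli_group_carrier by blast
  have off: "PV - ?C \<subseteq> pauli_group n - ?C" using PV by blast
  have vc: "?v \<in> carrier_vec (2 ^ n)"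
    unfolding W_def by (rule mult_mat_vec_carrier[OF lin_comb_carrier \<psi>c])
  have centr: "(P *\<^sub>v \<psi>) \<bullet>c ?v = 0" if "P \<in> PV \<inter> ?C" for P
  proof -
    have P: "P \<in> carrier_mat (2 ^ n) (2 ^ n)" "hermitian_mat P" "\<forall>q\<in>Q. P * q = q * P"
      using that PV PVc by (auto simp: pauli_centralizer_def)
    have "?v \<bullet>c (P *\<^sub>v \<psi>) = 0"
      unfolding W_def using lin_comb_off_centralizer_orthogonal[OF Q off \<psi> P] .
    then show ?thesis using cscalar_prod_swap[OF vc, of "P *\<^sub>v \<psi>"] P \<psi>c by simp
  qed
  have "(lin_comb n c PV *\<^sub>v \<psi>) \<bullet>c ?v =
        (\<Sum>P\<in>PV \<inter> ?C. c P * ((P *\<^sub>v \<psi>) \<bullet>c ?v)) + (\<Sum>P\<in>PV - ?C. c P * ((P *\<^sub>v \<psi>) \<bullet>c ?v))"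
    unfolding lin_comb_cscalar_prod[OF PVc \<psi>c vc] by (rule sum.Int_Diff[OF PV(1)])
  also have "(\<Sum>P\<in>PV \<inter> ?C. c P * ((P *\<^sub>v \<psi>) \<bullet>c ?v)) = 0"
    using centr by simp
  also have "0 + (\<Sum>P\<in>PV - ?C. c P * ((P *\<^sub>v \<psi>) \<bullet>c ?v)) = ?v \<bullet>c ?v"
    using lin_comb_cscalar_prod[of "PV - ?C" n \<psi> ?v c] PVc \<psi>c vc by (simp add: W_def)
  finally show ?thesis .
qed

lemma hamiltonian_overlap_off_centralizer:
  fixes c d :: "complex mat \<Rightarrow> complex"
  assumes Q: "Q \<subseteq> pauli_group n" and G: "G \<subseteq> Q" and \<psi>: "\<psi> \<in> code_space n Q"
    and PV: "finite PV" "PV \<subseteq> pauli_group n" "\<forall>P\<in>PV. hermitian_mat P"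
  defines "W \<equiv> lin_comb n c (PV - pauli_centralizer n Q)"
  shows "((lin_comb n d G + lin_comb n c PV) *\<^sub>v \<psi>) \<bullet>c (W *\<^sub>v \<psi>) = (W *\<^sub>v \<psi>) \<bullet>c (W *\<^sub>v \<psi>)"
proof -
  have \<psi>c: "\<psi> \<in> carrier_vec (2 ^ n)" using \<psi> by (simp add: code_space_def)
  have vecs: "lin_comb n e S *\<^sub>v \<psi> \<in> carrier_vec (2 ^ n)" for e S
    by (rule mult_mat_vec_carrier[OF lin_comb_carrier \<psi>c])
  have "(W *\<^sub>v \<psi>) \<bullet>c \<psi> = 0"
    unfolding W_def using PV(2) by (intro lin_comb_off_centralizer_orthogonal_code_state[OF Q _ \<psi>]) auto
  then have "(lin_comb n d G *\<^sub>v \<psi>) \<bullet>c (W *\<^sub>v \<psi>) = 0"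
    using lin_comb_stabilizers_cscalar_prod[OF Q G \<psi>] cscalar_prod_swap[OF _ \<psi>c] vecs
    by (simp add: W_def)
  moreover have "(lin_comb n d G + lin_comb n c PV) *\<^sub>v \<psi> = lin_comb n d G *\<^sub>v \<psi> + lin_comb n c PV *\<^sub>v \<psi>"
    by (rule add_mult_distrib_mat_vec[OF lin_comb_carrier lin_comb_carrier \<psi>c])
  ultimately show ?thesis
    using lin_comb_overlap_off_centralizer[OF Q \<psi> PV, of c] vecs
    by (simp add: add_scalar_prod_distrib[of _ "2 ^ n"] W_def)
qed

section \<open>Energy along the perturbed state\<close>

lemma energy_gain_along_perturbation:
  fixes H :: "complex mat" and \<psi> v :: "complex vec" and t :: real
  assumes H: "H \<in> carrier_mat N N" "hermitian_mat H"
    and \<psi>: "\<psi> \<in> carrier_vec N" "vnorm \<psi> = 1" and v: "v \<in> carrier_vec N"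
    and orth: "v \<bullet>c \<psi> = 0" and overlap: "(H *\<^sub>v \<psi>) \<bullet>c v = v \<bullet>c v"
  defines "a \<equiv> Re (v \<bullet>c v)" and "u \<equiv> \<psi> - complex_of_real t \<cdot>\<^sub>v v"
  shows "Re (expect H \<psi>) - Re (expect H (complex_of_real (1 / vnorm u) \<cdot>\<^sub>v u))
         = t * (2 * a + (a * Re (expect H \<psi>) - Re (expect H v)) * t) / (1 + a * t^2)"
proof -
  define E0 where "E0 = Re (expect H \<psi>)"
  define c where "c = Re (expect H v)"
  have vv: "v \<bullet>c v = complex_of_real a" and a: "a \<ge> 0"
    using cscalar_prod_self_real_nonneg[of v] by (simp_all add: a_def)
  have D: "1 + a * t^2 > 0" using a by (simp add: add_pos_nonneg)
  have \<psi>v: "\<psi> \<bullet>c v = 0" using cscalar_prod_swap[OF v \<psi>(1)] orth by simp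
  have Hv\<psi>: "(H *\<^sub>v v) \<bullet>c \<psi> = complex_of_real a"
    using hermitian_mat_cscalar_prod[OF H v \<psi>(1)] cscalar_prod_swap[of "H *\<^sub>v \<psi>" N v] H \<psi>(1) v
    by (simp add: overlap vv)
  have "u \<bullet>c u = \<psi> \<bullet>c \<psi> + complex_of_real (t^2 * a)"
    unfolding u_def using cscalar_prod_diff_smult[OF \<psi>(1) v \<psi>(1) v] \<psi>v orth vv
    by (simp add: power2_eq_square)
  then have "Re (u \<bullet>c u) = 1 + a * t^2"
    using vnorm_eq_1_cscalar_prod[OF \<psi>(2)] by simp
  then have \<rho>: "(1 / vnorm u)^2 = 1 / (1 + a * t^2)"
    using D by (simp add: vnorm_def power_divide)
  have "H *\<^sub>v u = H *\<^sub>v \<psi> - complex_of_real t \<cdot>\<^sub>v (H *\<^sub>v v)"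
    unfolding u_def using H \<psi>(1) v by (simp add: mult_minus_distrib_mat_vec mult_mat_vec)
  then have "Re ((H *\<^sub>v u) \<bullet>c u) = E0 - 2 * t * a + t^2 * c"
    unfolding u_def E0_def c_def expect_def
    using cscalar_prod_diff_smult[of "H *\<^sub>v \<psi>" N "H *\<^sub>v v" \<psi> v] H \<psi>(1) v overlap vv Hv\<psi>
    by (simp add: power2_eq_square)
  moreover have "expect H (complex_of_real (1 / vnorm u) \<cdot>\<^sub>v u) =
                 complex_of_real ((1 / vnorm u)^2) * ((H *\<^sub>v u) \<bullet>c u)"
    unfolding expect_def u_def using H \<psi>(1) v
    by (simp add: mult_mat_vec cscalar_prod_smult_right power2_eq_square)
  ultimately have "Re (expect H (complex_of_real (1 / vnorm u) \<cdot>\<^sub>v u)) = (E0 - 2 * t * a + t^2 * c) / (1 + a * t^2)"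
    using \<rho> by simp
  then show ?thesis
    unfolding E0_def[symmetric] c_def[symmetric] using D by (simp add: field_simps power2_eq_square)
qed

lemma ratio_pos_mono_near_zero:
  fixes a k :: real
  assumes a: "a > 0"
  defines "f \<equiv> \<lambda>t. t * (2 * a + k * t) / (1 + a * t^2)"
  shows "\<exists>tmax>0. (\<forall>t. 0 < t \<and> t < tmax \<longrightarrow> f t > 0) \<and> mono_on {0<..<tmax} f"
proof -
  \<comment> \<open>For \<open>0 < s, t < tm\<close> this keeps \<open>2a + kt\<close> and \<open>2a + k(t + s) - 2a\<^sup>2ts\<close>, the numerators
    of \<open>f t\<close> and of \<open>(f t - f s) / (t - s)\<close>, positive.\<close>
  define tm where "tm = min (a / (2 * (\<bar>k\<bar> + 1))) (1 / (2 * (a + 1)))"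
  have "tm > 0" using a by (simp add: tm_def)
  have small: "\<bar>k\<bar> * t < a / 2" "a * t < 1 / 2" "t < 1" if t: "0 < t" "t < tm" for t
  proof -
    have "t * (2 * (\<bar>k\<bar> + 1)) < a" "t * (2 * (a + 1)) < 1"
      using t a by (simp_all add: tm_def pos_less_divide_eq)
    moreover have "\<bar>k\<bar> * t \<le> (\<bar>k\<bar> + 1) * t" "a * t \<le> (a + 1) * t" "t \<le> (a + 1) * t"
      using t a by (simp_all add: algebra_simps)
    ultimately show "\<bar>k\<bar> * t < a / 2" "a * t < 1 / 2" "t < 1"
      by (simp_all add: algebra_simps)
  qed
  have lower: "- (\<bar>k\<bar> * t) \<le> k * t" if "0 < t" for t
    using abs_ge_minus_self[of "k * t"] that by (simp add: abs_mult)
  have D: "1 + a * t^2 > 0" for t using a by (simp add: add_pos_nonneg)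
  have pos: "f t > 0" if "0 < t" "t < tm" for t
  proof -
    have "2 * a + k * t > 0" using small(1)[OF that] lower[of t] that a by linarith
    then show ?thesis using that D by (simp add: f_def)
  qed
  have mono: "f s \<le> f t" if st: "s \<in> {0<..<tm}" "t \<in> {0<..<tm}" "s \<le> t" for s t
  proof -
    have "(a * t) * s < (a * t) * 1"
      using small(3)[of s] st a by (intro mult_strict_left_mono) auto
    also have "\<dots> < 1 / 2" using small(2)[of t] st by simp
    finally have "2 * a * ((a * t) * s) < 2 * a * (1 / 2)"
      using a by (intro mult_strict_left_mono) auto
    moreover have "- (\<bar>k\<bar> * (t + s)) \<le> k * (t + s)" using lower[of "t + s"] st by simp
    ultimately have key: "2 * a + k * (t + s) - 2 * a^2 * t * s > 0"
      using small(1)[of t] small(1)[of s] st by (simp add: power2_eq_square algebra_simps)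
    have "f t - f s = (t - s) * (2 * a + k * (t + s) - 2 * a^2 * t * s) / ((1 + a * t^2) * (1 + a * s^2))"
      using D[of s] D[of t] unfolding f_def
      by (simp add: diff_frac_eq) (simp add: power2_eq_square algebra_simps)
    also have "\<dots> \<ge> 0" using key st D[of s] D[of t] by simp
    finally show ?thesis by simp
  qed
  show ?thesis using \<open>tm > 0\<close> pos mono by (intro exI[of _ tm]) (auto simp: mono_on_def)
qed

theorem lemma4:
  fixes n :: nat and Q G PV :: "complex mat set" and w :: "complex mat \<Rightarrow> real"
    and \<psi> :: "complex vec"
  defines "HQ \<equiv> lin_comb n (\<lambda>_. -1) G"
    and "V \<equiv> lin_comb n (\<lambda>P. - complex_of_real (w P)) PV"
    and "Vperp \<equiv> lin_comb n (\<lambda>P. - complex_of_real (w P)) (PV - pauli_centralizer n Q)"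
    and "\<Delta>gap \<equiv> (2::real)"
  assumes stab: "stabilizer_group n Q"
    and gen_sub: "G \<subseteq> Q"
    and gen_herm: "\<forall>g\<in>G. hermitian_mat g"
    and gen_indep: "independent_gens n G"
    and gen_gen: "generated n G = Q"
    and PV_fin: "finite PV"
    and PV_pauli: "PV \<subseteq> pauli_group n"
    and PV_herm: "\<forall>P\<in>PV. hermitian_mat P"
    and w_pos: "\<forall>P\<in>PV. w P > 0"
    and Vperp_nz: "Vperp \<noteq> 0\<^sub>m (2^n) (2^n)"
    and psi_code: "\<psi> \<in> code_space n Q"
    and psi_state: "vnorm \<psi> = 1"
    and cond_i: "expect (Vperp * Vperp) \<psi> \<noteq> 0"
    and cond_ii: "(\<Sum>P\<in>PV - Q. w P) < \<Delta>gap - 2 * (\<Sum>P\<in>PV \<inter> Q. w P)"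
  shows "let H = HQ + V;
             psi_l = (\<lambda>t::real. let u = \<psi> - complex_of_real t \<cdot>\<^sub>v (Vperp *\<^sub>v \<psi>)
                                in complex_of_real (1 / vnorm u) \<cdot>\<^sub>v u);
             \<Delta>E = (\<lambda>t::real. Re (expect H \<psi>) - Re (expect H (psi_l t)))
         in \<exists>tmax > 0. (\<forall>t. 0 < t \<and> t < tmax \<longrightarrow> \<Delta>E t > 0) \<and>
                       mono_on {0<..<tmax} \<Delta>E"
proof -
  let ?N = "2 ^ n" and ?v = "Vperp *\<^sub>v \<psi>"
  have Q: "Q \<subseteq> pauli_group n" using stab by (simp add: stabilizer_group_def)
  have \<psi>: "\<psi> \<in> carrier_vec ?N" using psi_code by (simp add: code_space_def)
  have Vperp: "Vperp \<in> carrier_mat ?N ?N" "hermitian_mat Vperp"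
    unfolding Vperp_def using PV_pauli PV_herm pauli_group_carrier by (auto intro!: hermitian_lin_comb)
  have "hermitian_mat HQ" "hermitian_mat V"
    unfolding HQ_def V_def using gen_sub Q gen_herm PV_pauli PV_herm pauli_group_carrier
    by (auto intro!: hermitian_lin_comb)
  then have H: "HQ + V \<in> carrier_mat ?N ?N" "hermitian_mat (HQ + V)"
    unfolding HQ_def V_def by (auto intro: hermitian_mat_add[of _ _ ?N])
  have v: "?v \<in> carrier_vec ?N" using Vperp \<psi> by simp
  have orth: "?v \<bullet>c \<psi> = 0"
    unfolding Vperp_def using Q PV_pauli psi_code by (intro lin_comb_off_centralizer_orthogonal_code_state) auto
  have overlap: "((HQ + V) *\<^sub>v \<psi>) \<bullet>c ?v = ?v \<bullet>c ?v"
    unfolding HQ_def V_def Vperp_def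
    by (rule hamiltonian_overlap_off_centralizer[OF Q gen_sub psi_code PV_fin PV_pauli PV_herm])
  have "?v \<bullet>c ?v \<noteq> 0"
    using cond_i hermitian_mat_cscalar_prod[OF Vperp v \<psi>] Vperp \<psi> by (simp add: expect_def)
  then have "Re (?v \<bullet>c ?v) > 0"
    using cscalar_prod_self_real_nonneg[of ?v] by (metis less_eq_real_def of_real_0)
  then show ?thesis
    unfolding Let_def energy_gain_along_perturbation[OF H \<psi> psi_state v orth overlap]
    by (rule ratio_pos_mono_near_zero)
qed

end
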